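(* If $X$ satisfies ${\sf S}_1(\mathcal{G}_K,\mathcal{G}_{D_\Gamma})$, then $X$ is productively weakly Menger: for every weakly Menger space $Y$, $X\times Y$ is weakly Menger.
   Context: All spaces are infinite ${\sf T}_1$ topological spaces. $\mathcal{G}_K$ is the family of all collections $\mathcal{U}$ of ${\sf G}_\delta$ subsets of $X$ with $X\notin\mathcal{U}$ such that each compact subset of $X$ is contained in some member of $\mathcal{U}$. $\mathcal{G}_{D_\Gamma}$ is the family of infinite collections $\mathcal{U}$ of ${\sf G}_\delta$ subsets of $X$ such that for each nonempty open $U\subseteq X$, $\{V\in\mathcal{U}:U\cap V=\emptyset\}$ is finite. ${\sf S}_1(\mathcal{A},\mathcal{B})$: for each sequence $(A_n)$ of elements of $\mathcal{A}$ there are $B_n\in A_n$ with $\{B_n:n\in\mathbb{N}\}\in\mathcal{B}$. A space is weakly Menger if for each sequence $(\mathcal{U}_n)$ of open covers there are finite $\mathcal{V}_n\subseteq\mathcal{U}_n$ such that $\bigcup_n\bigcup\mathcal{V}_n$ is dense. *)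

theory Defs
  imports "HOL-Analysis.Analysis"
begin

definition G_K :: "'a topology \<Rightarrow> 'a set set set" where
  "G_K X = {\<U>. (\<forall>V\<in>\<U>. gdelta_in X V) \<and> topspace X \<notin> \<U> \<and>
                 (\<forall>K. compactin X K \<longrightarrow> (\<exists>V\<in>\<U>. K \<subseteq> V))}"

definition G_DGamma :: "'a topology \<Rightarrow> 'a set set set" where
  "G_DGamma X = {\<U>. infinite \<U> \<and> (\<forall>V\<in>\<U>. gdelta_in X V) \<and>
                 (\<forall>U. openin X U \<and> U \<noteq> {} \<longrightarrow> finite {V\<in>\<U>. U \<inter> V = {}})}"

definition S1 :: "'x set set \<Rightarrow> 'x set set \<Rightarrow> bool" where
  "S1 A B \<longleftrightarrow> (\<forall>F :: nat \<Rightarrow> 'x set. (\<forall>n. F n \<in> A) \<longrightarrow>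
       (\<exists>b :: nat \<Rightarrow> 'x. (\<forall>n. b n \<in> F n) \<and> range b \<in> B))"

definition open_cover :: "'a topology \<Rightarrow> 'a set set \<Rightarrow> bool" where
  "open_cover X \<U> \<longleftrightarrow> (\<forall>U\<in>\<U>. openin X U) \<and> \<Union>\<U> = topspace X"

definition weakly_Menger :: "'a topology \<Rightarrow> bool" where
  "weakly_Menger X \<longleftrightarrow> (\<forall>\<U> :: nat \<Rightarrow> 'a set set. (\<forall>n. open_cover X (\<U> n)) \<longrightarrow>
      (\<exists>\<V> :: nat \<Rightarrow> 'a set set. (\<forall>n. finite (\<V> n) \<and> \<V> n \<subseteq> \<U> n) \<and>
          X closure_of (\<Union>n. \<Union>(\<V> n)) = topspace X))"

end

theory Submission imports Defs begin

text \<open>Split a sequence of open covers of \<open>X \<times> Y\<close> into countably many subsequences.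
  For a compact \<open>K \<subseteq> X\<close>, the tube lemma turns each cover of \<open>X \<times> Y\<close> into an open cover
  of \<open>Y\<close> by sets \<open>V\<close> such that \<open>G \<times> V\<close> is covered by finitely many members, for some
  open \<open>G \<supseteq> K\<close>; weak Mengerness of \<open>Y\<close> then yields a G-delta set \<open>H \<supseteq> K\<close> and a
  dense \<open>D \<subseteq> Y\<close> with \<open>H \<times> D\<close> covered by finite selections from the subsequence. If
  such an \<open>H\<close> can be all of \<open>X\<close>, we are done. Otherwise, for each subsequence, these sets
  \<open>H\<close> form a member of \<open>G_K\<close>, and the selection principle picks one \<open>H\<close> per subsequence
  so that every nonempty open subset of \<open>X\<close> meets one of them; the union of the
  corresponding products \<open>H \<times> D\<close> is then dense in \<open>X \<times> Y\<close>.\<close>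

definition dense_tube_bases ::
    "'a topology \<Rightarrow> 'b topology \<Rightarrow> (nat \<Rightarrow> ('a \<times> 'b) set set) \<Rightarrow> 'a set set" where
  "dense_tube_bases X Y \<W> = {H. gdelta_in X H \<and>
     (\<exists>\<V> D. (\<forall>k. finite (\<V> k) \<and> \<V> k \<subseteq> \<W> k) \<and> Y closure_of D = topspace Y \<and>
            H \<times> D \<subseteq> (\<Union>k. \<Union>(\<V> k)))}"

lemma open_cover_finite_tubes:
  assumes K: "compactin X K" and \<W>: "open_cover (prod_topology X Y) \<W>"
  shows "open_cover Y {V. openin Y V \<and>
           (\<exists>G \<F>. openin X G \<and> K \<subseteq> G \<and> finite \<F> \<and> \<F> \<subseteq> \<W> \<and> G \<times> V \<subseteq> \<Union>\<F>)}"
    (is "open_cover Y ?C")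
proof -
  have "y \<in> \<Union>?C" if y: "y \<in> topspace Y" for y
  proof -
    have "compactin (prod_topology X Y) (K \<times> {y})"
      using K y by (simp add: compactin_Times)
    moreover have "K \<times> {y} \<subseteq> \<Union>\<W>"
      using \<W> compactin_subset_topspace[OF K] y by (auto simp: open_cover_def)
    ultimately obtain \<F> where \<F>: "finite \<F>" "\<F> \<subseteq> \<W>" "K \<times> {y} \<subseteq> \<Union>\<F>"
      using compactinD \<W> unfolding open_cover_def by meson
    have "openin (prod_topology X Y) (\<Union>\<F>)"
      using \<F>(2) \<W> by (auto simp: open_cover_def)
    then obtain G V where "openin X G" "openin Y V" "K \<subseteq> G" "y \<in> V" "G \<times> V \<subseteq> \<Union>\<F>"
      using tube_lemma_left[OF _ K y \<F>(3)] by blast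
    with \<F> show ?thesis
      by blast
  qed
  moreover have "\<Union>?C \<subseteq> topspace Y"
    using openin_subset by blast
  ultimately show ?thesis
    unfolding open_cover_def by blast
qed

lemma compact_subset_dense_tube_base:
  assumes Y: "weakly_Menger Y" and K: "compactin X K"
    and \<W>: "\<And>k. open_cover (prod_topology X Y) (\<W> k)"
  obtains H where "H \<in> dense_tube_bases X Y \<W>" "K \<subseteq> H"
proof -
  define C where "C k = {V. openin Y V \<and>
      (\<exists>G \<F>. openin X G \<and> K \<subseteq> G \<and> finite \<F> \<and> \<F> \<subseteq> \<W> k \<and> G \<times> V \<subseteq> \<Union>\<F>)}" for k
  have "open_cover Y (C k)" for k
    unfolding C_def using open_cover_finite_tubes[OF K \<W>] .
  then obtain E where E: "\<And>k. finite (E k) \<and> E k \<subseteq> C k"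
    and dense: "Y closure_of (\<Union>k. \<Union>(E k)) = topspace Y"
    using Y unfolding weakly_Menger_def by blast
  obtain G \<F> where G\<F>: "\<And>k V. V \<in> E k \<Longrightarrow> openin X (G k V) \<and> K \<subseteq> G k V \<and>
      finite (\<F> k V) \<and> \<F> k V \<subseteq> \<W> k \<and> G k V \<times> V \<subseteq> \<Union>(\<F> k V)"
    using E unfolding C_def by (simp add: subset_iff) metis
  define H where "H = \<Inter>(insert (topspace X) (\<Union>k. G k ` E k))"
  define \<V> where "\<V> k = \<Union>(\<F> k ` E k)" for k
  have "countable (\<Union>k. G k ` E k)"
    using E by (simp add: countable_finite)
  then have "gdelta_in X H"
    unfolding H_def using G\<F> by (intro gdelta_in_Inter) (auto intro: open_imp_gdelta_in)
  moreover have "finite (\<V> k) \<and> \<V> k \<subseteq> \<W> k" for k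
    unfolding \<V>_def using E G\<F> by (simp add: subset_iff) blast
  moreover have "H \<times> (\<Union>k. \<Union>(E k)) \<subseteq> (\<Union>k. \<Union>(\<V> k))"
    unfolding \<V>_def using G\<F> by (fastforce simp: H_def)
  ultimately have "H \<in> dense_tube_bases X Y \<W>"
    unfolding dense_tube_bases_def using dense by blast
  moreover have "K \<subseteq> H"
    using G\<F> K compactin_subset_topspace by (fastforce simp: H_def)
  ultimately show ?thesis
    by (rule that)
qed

lemma G_DGamma_meets_open:
  assumes "\<U> \<in> G_DGamma X" "openin X U" "U \<noteq> {}"
  shows "\<exists>V\<in>\<U>. U \<inter> V \<noteq> {}"
proof -
  have "infinite \<U>" "finite {V\<in>\<U>. U \<inter> V = {}}"
    using assms unfolding G_DGamma_def by blast+
  then have "\<U> \<noteq> {V\<in>\<U>. U \<inter> V = {}}"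
    by auto
  then show ?thesis
    by blast
qed

lemma prod_closure_of_eq_topspace:
  assumes D: "\<And>n. Y closure_of D n = topspace Y"
    and H: "\<And>U. openin X U \<Longrightarrow> U \<noteq> {} \<Longrightarrow> \<exists>n. U \<inter> H n \<noteq> {}"
    and S: "\<And>n. H n \<times> D n \<subseteq> S"
  shows "prod_topology X Y closure_of S = topspace (prod_topology X Y)"
proof -
  have "(x, y) \<in> prod_topology X Y closure_of S"
    if x: "x \<in> topspace X" and y: "y \<in> topspace Y" for x y
    unfolding in_closure_of
  proof (intro conjI allI impI)
    show "(x, y) \<in> topspace (prod_topology X Y)"
      using x y by simp
    fix T assume T: "(x, y) \<in> T \<and> openin (prod_topology X Y) T"
    then obtain U V where UV: "openin X U" "openin Y V" "x \<in> U" "y \<in> V" "U \<times> V \<subseteq> T"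
      using openin_prod_topology_alt[of X Y T] by blast
    then obtain n x' where x': "x' \<in> U" "x' \<in> H n"
      using H[OF UV(1)] by blast
    have "y \<in> Y closure_of D n"
      using D y by simp
    then obtain y' where "y' \<in> D n" "y' \<in> V"
      using UV unfolding in_closure_of by blast
    then show "\<exists>p. p \<in> S \<and> p \<in> T"
      using S UV(5) x' by blast
  qed
  then show ?thesis
    using closure_of_subset_topspace by fastforce
qed

lemma diagonal_selection:
  assumes "\<forall>n k. finite (\<V> n k) \<and> \<V> n k \<subseteq> \<W> (prod_encode (n, k))"
  obtains \<U> where "\<forall>m. finite (\<U> m) \<and> \<U> m \<subseteq> \<W> m"
    and "(\<Union>m. \<Union>(\<U> m)) = (\<Union>n. \<Union>k. \<Union>(\<V> n k))"
proof
  let ?\<U> = "\<lambda>m. case_prod \<V> (prod_decode m)"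
  show "\<forall>m. finite (?\<U> m) \<and> ?\<U> m \<subseteq> \<W> m"
  proof
    fix m
    show "finite (?\<U> m) \<and> ?\<U> m \<subseteq> \<W> m"
      using assms[rule_format, of "fst (prod_decode m)" "snd (prod_decode m)"]
      by (simp add: case_prod_beta)
  qed
  show "(\<Union>m. \<Union>(?\<U> m)) = (\<Union>n. \<Union>k. \<Union>(\<V> n k))"
    by (auto simp: case_prod_beta) (metis fst_conv prod_encode_inverse snd_conv)
qed

lemma dense_tube_bases_in_G_K:
  assumes "weakly_Menger Y" "\<And>k. open_cover (prod_topology X Y) (\<W> k)"
    and "topspace X \<notin> dense_tube_bases X Y \<W>"
  shows "dense_tube_bases X Y \<W> \<in> G_K X"
proof -
  have "\<forall>H\<in>dense_tube_bases X Y \<W>. gdelta_in X H"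
    unfolding dense_tube_bases_def by blast
  moreover have "\<forall>K. compactin X K \<longrightarrow> (\<exists>H\<in>dense_tube_bases X Y \<W>. K \<subseteq> H)"
  proof (intro allI impI)
    fix K assume "compactin X K"
    then show "\<exists>H\<in>dense_tube_bases X Y \<W>. K \<subseteq> H"
      by (rule compact_subset_dense_tube_base[where \<W> = \<W>, OF assms(1) _ assms(2)]) blast
  qed
  ultimately show ?thesis
    using assms(3) unfolding G_K_def by blast
qed

lemma dense_selection_from_full_tube_base:
  fixes \<W> :: "nat \<Rightarrow> nat \<Rightarrow> ('a \<times> 'b) set set"
  assumes "topspace X \<in> dense_tube_bases X Y (\<W> n\<^sub>0)"
  obtains \<V> where "\<forall>n k. finite (\<V> n k) \<and> \<V> n k \<subseteq> \<W> n k"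
    and "prod_topology X Y closure_of (\<Union>n. \<Union>k. \<Union>(\<V> n k)) = topspace (prod_topology X Y)"
proof -
  obtain \<V> D where \<V>: "\<forall>k. finite (\<V> k) \<and> \<V> k \<subseteq> \<W> n\<^sub>0 k"
    and D: "Y closure_of D = topspace Y" and XD: "topspace X \<times> D \<subseteq> (\<Union>k. \<Union>(\<V> k))"
    using assms unfolding dense_tube_bases_def by blast
  define \<V>' where "\<V>' n k = (if n = n\<^sub>0 then \<V> k else {})" for n k
  have "topspace X \<times> D \<subseteq> (\<Union>k. \<Union>(\<V>' n\<^sub>0 k))"
    using XD by (simp add: \<V>'_def)
  also have "\<dots> \<subseteq> (\<Union>n. \<Union>k. \<Union>(\<V>' n k))"
    by blast
  finally have "prod_topology X Y closure_of (\<Union>n. \<Union>k. \<Union>(\<V>' n k)) = topspace (prod_topology X Y)"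
    using D
    by (intro prod_closure_of_eq_topspace[where H = "\<lambda>_. topspace X" and D = "\<lambda>_. D"])
       (auto dest!: openin_subset)
  moreover have "\<forall>n k. finite (\<V>' n k) \<and> \<V>' n k \<subseteq> \<W> n k"
    using \<V> by (simp add: \<V>'_def)
  ultimately show ?thesis
    using that by simp
qed

lemma dense_selection_from_S1:
  fixes \<W> :: "nat \<Rightarrow> nat \<Rightarrow> ('a \<times> 'b) set set"
  assumes S1: "S1 (G_K X) (G_DGamma X)" and Y: "weakly_Menger Y"
    and covers: "\<And>n k. open_cover (prod_topology X Y) (\<W> n k)"
    and proper: "\<forall>n. topspace X \<notin> dense_tube_bases X Y (\<W> n)"
  obtains \<V> where "\<forall>n k. finite (\<V> n k) \<and> \<V> n k \<subseteq> \<W> n k"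
    and "prod_topology X Y closure_of (\<Union>n. \<Union>k. \<Union>(\<V> n k)) = topspace (prod_topology X Y)"
proof -
  have "dense_tube_bases X Y (\<W> n) \<in> G_K X" for n
    using Y covers proper by (intro dense_tube_bases_in_G_K) auto
  then obtain H where H: "\<And>n. H n \<in> dense_tube_bases X Y (\<W> n)"
    and H_DGamma: "range H \<in> G_DGamma X"
    using S1[unfolded S1_def, rule_format, of "\<lambda>n. dense_tube_bases X Y (\<W> n)"] by blast
  have meets: "\<exists>n. U \<inter> H n \<noteq> {}" if "openin X U" "U \<noteq> {}" for U
    using G_DGamma_meets_open[OF H_DGamma that] by blast
  have "\<forall>n. \<exists>\<V> D. (\<forall>k. finite (\<V> k) \<and> \<V> k \<subseteq> \<W> n k) \<and>
           Y closure_of D = topspace Y \<and> H n \<times> D \<subseteq> (\<Union>k. \<Union>(\<V> k))"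
    using H unfolding dense_tube_bases_def by blast
  then obtain \<V> D where \<V>: "\<forall>n k. finite (\<V> n k) \<and> \<V> n k \<subseteq> \<W> n k"
    and D: "\<And>n. Y closure_of D n = topspace Y"
    and HD: "\<And>n. H n \<times> D n \<subseteq> (\<Union>k. \<Union>(\<V> n k))"
    by metis
  have HD': "H n \<times> D n \<subseteq> (\<Union>n. \<Union>k. \<Union>(\<V> n k))" for n
    using HD[of n] by blast
  show ?thesis
    using \<V> prod_closure_of_eq_topspace[where D = D and H = H, OF D meets HD'] by (rule that)
qed

lemma dense_double_selection:
  fixes \<W> :: "nat \<Rightarrow> nat \<Rightarrow> ('a \<times> 'b) set set"
  assumes "S1 (G_K X) (G_DGamma X)" and "weakly_Menger Y"
    and "\<And>n k. open_cover (prod_topology X Y) (\<W> n k)"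
  obtains \<V> where "\<forall>n k. finite (\<V> n k) \<and> \<V> n k \<subseteq> \<W> n k"
    and "prod_topology X Y closure_of (\<Union>n. \<Union>k. \<Union>(\<V> n k)) = topspace (prod_topology X Y)"
proof (cases "\<exists>n. topspace X \<in> dense_tube_bases X Y (\<W> n)")
  case True
  then obtain n\<^sub>0 where "topspace X \<in> dense_tube_bases X Y (\<W> n\<^sub>0)"
    by blast
  then show ?thesis
    by (rule dense_selection_from_full_tube_base) (rule that)
next
  case False
  then have "\<forall>n. topspace X \<notin> dense_tube_bases X Y (\<W> n)"
    by blast
  with assms show ?thesis
    by (rule dense_selection_from_S1) (rule that)
qed

theorem theorem5p15:
  fixes X :: "'a topology" and Y :: "'b topology"
  assumes "t1_space X" and "infinite (topspace X)"
    and "S1 (G_K X) (G_DGamma X)"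
    and "t1_space Y" and "infinite (topspace Y)"
    and "weakly_Menger Y"
  shows "weakly_Menger (prod_topology X Y)"
  unfolding weakly_Menger_def
proof (intro allI impI)
  fix \<W> :: "nat \<Rightarrow> ('a \<times> 'b) set set"
  assume "\<forall>n. open_cover (prod_topology X Y) (\<W> n)"
  then have "open_cover (prod_topology X Y) (\<W> (prod_encode (n, k)))" for n k
    by blast
  then obtain \<V> where \<V>: "\<forall>n k. finite (\<V> n k) \<and> \<V> n k \<subseteq> \<W> (prod_encode (n, k))"
    and dense: "prod_topology X Y closure_of (\<Union>n. \<Union>k. \<Union>(\<V> n k)) = topspace (prod_topology X Y)"
    using dense_double_selection[OF assms(3,6), where \<W> = "\<lambda>n k. \<W> (prod_encode (n, k))"]
    by blast
  obtain \<U> where "\<forall>m. finite (\<U> m) \<and> \<U> m \<subseteq> \<W> m"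
    and "(\<Union>m. \<Union>(\<U> m)) = (\<Union>n. \<Union>k. \<Union>(\<V> n k))"
    using \<V> by (rule diagonal_selection)
  with dense show "\<exists>\<V>. (\<forall>n. finite (\<V> n) \<and> \<V> n \<subseteq> \<W> n) \<and>
          prod_topology X Y closure_of (\<Union>n. \<Union>(\<V> n)) = topspace (prod_topology X Y)"
    by (intro exI[of _ \<U>]) simp
qed

end
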